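(* Let $(X,d)$ be a metric space, $\emptyset\neq F\subseteq X$, and let $G,H:\mathbb{R}_+\to\mathbb{R}_+$ satisfy property (G) and property (H). Let $(x_n)$ be a sequence in $X$ which is $(G,H)$-Fej\'er monotone w.r.t. $F$. (i) If $\{x_n\mid n\in\mathbb{N}\}$ has an adherent point (a point of its closure) $\hat x\in F$, then $(x_n)$ converges to $\hat x$. (ii) If moreover $H$ has the property that for every sequence $(a_n)$ in $\mathbb{R}_+$ with $(H(a_n))$ bounded, $(a_n)$ is bounded, then $(x_n)$ is bounded.
   Context: $\mathbb{R}_+$ denotes the nonnegative reals. Property (G): for every sequence $(a_n)$ in $\mathbb{R}_+$, $a_n\to 0$ implies $G(a_n)\to0$. Property (H): for every sequence $(a_n)$ in $\mathbb{R}_+$, $H(a_n)\to0$ implies $a_n\to0$. $(x_n)$ is $(G,H)$-Fej\'er monotone w.r.t. $F$ if $H(d(x_{n+m},p))\le G(d(x_n,p))$ for all $n,m\in\mathbb{N}$ and all $p\in F$. *)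

theory Defs
  imports "HOL-Analysis.Analysis"
begin

text \<open>Functions R+ -> R+ are modelled as real => real mapping nonnegatives to nonnegatives.\<close>

definition nonneg_map :: "(real \<Rightarrow> real) \<Rightarrow> bool" where
  "nonneg_map G \<longleftrightarrow> (\<forall>t\<ge>0. G t \<ge> 0)"

definition property_G :: "(real \<Rightarrow> real) \<Rightarrow> bool" where
  "property_G G \<longleftrightarrow>
     (\<forall>a :: nat \<Rightarrow> real. (\<forall>n. a n \<ge> 0) \<longrightarrow> a \<longlonglongrightarrow> 0 \<longrightarrow> (\<lambda>n. G (a n)) \<longlonglongrightarrow> 0)"

definition property_H :: "(real \<Rightarrow> real) \<Rightarrow> bool" where
  "property_H H \<longleftrightarrow>
     (\<forall>a :: nat \<Rightarrow> real. (\<forall>n. a n \<ge> 0) \<longrightarrow> (\<lambda>n. H (a n)) \<longlonglongrightarrow> 0 \<longrightarrow> a \<longlonglongrightarrow> 0)"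

definition GH_fejer_monotone ::
  "(real \<Rightarrow> real) \<Rightarrow> (real \<Rightarrow> real) \<Rightarrow> 'a::metric_space set \<Rightarrow> (nat \<Rightarrow> 'a) \<Rightarrow> bool" where
  "GH_fejer_monotone G H F x \<longleftrightarrow>
     (\<forall>n m. \<forall>p\<in>F. H (dist (x (n + m)) p) \<le> G (dist (x n) p))"

definition bounded_preimage_prop :: "(real \<Rightarrow> real) \<Rightarrow> bool" where
  "bounded_preimage_prop H \<longleftrightarrow>
     (\<forall>a :: nat \<Rightarrow> real. (\<forall>n. a n \<ge> 0) \<longrightarrow> bounded (range (\<lambda>n. H (a n))) \<longrightarrow> bounded (range a))"

end

theory Submission
  imports Defs
begin

text \<open>
  If \<open>p \<in> F\<close> is adherent to the orbit, some \<open>x n\<close> is as close to \<open>p\<close> as we like; by (G) this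
  makes \<open>G (d (x n, p))\<close> small, and Fejer monotonicity bounds \<open>H (d (x m, p))\<close> by that value for
  all \<open>m \<ge> n\<close>. Hence \<open>H (d (x m, p)) \<rightarrow> 0\<close>, and (H) gives \<open>d (x m, p) \<rightarrow> 0\<close>. Boundedness is
  simpler: Fejer monotonicity at \<open>n = 0\<close> bounds \<open>H (d (x m, p))\<close> by \<open>G (d (x 0, p))\<close>.
\<close>

lemma property_G_tendsto_zero:
  assumes "property_G G"
  shows "(G \<longlongrightarrow> 0) (inf (nhds 0) (principal {0..}))"
proof (rule topological_tendstoI)
  fix S :: "real set"
  assume "open S" "0 \<in> S"
  show "eventually (\<lambda>t. G t \<in> S) (inf (nhds 0) (principal {0..}))"
  proof (rule sequentially_imp_eventually_nhds_within, safe)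
    fix a :: "nat \<Rightarrow> real"
    assume "\<forall>n. a n \<in> {0..}" "a \<longlonglongrightarrow> 0"
    then have "(\<lambda>n. G (a n)) \<longlonglongrightarrow> 0"
      using assms unfolding property_G_def by auto
    then show "\<forall>\<^sub>F n in sequentially. G (a n) \<in> S"
      using \<open>open S\<close> \<open>0 \<in> S\<close> by (rule topological_tendstoD)
  qed
qed

lemma property_G_small_near_zero:
  assumes "property_G G" "\<delta> > 0"
  obtains \<eta> where "\<eta> > 0" "\<And>t. 0 \<le> t \<Longrightarrow> t < \<eta> \<Longrightarrow> G t < \<delta>"
proof -
  have "eventually (\<lambda>t. dist (G t) 0 < \<delta>) (inf (nhds 0) (principal {0..}))"
    using tendstoD[OF property_G_tendsto_zero[OF assms(1)] assms(2)] .
  then obtain \<eta> where "\<eta> > 0" "\<And>t. dist t 0 < \<eta> \<Longrightarrow> t \<in> {0..} \<Longrightarrow> dist (G t) 0 < \<delta>"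
    unfolding eventually_inf_principal eventually_nhds_metric by auto
  then show thesis
    using that by force
qed

lemma GH_fejer_H_dist_tendsto_zero:
  assumes "nonneg_map H" "property_G G" "GH_fejer_monotone G H F x"
    and "p \<in> F" "p \<in> closure (range x)"
  shows "(\<lambda>m. H (dist (x m) p)) \<longlonglongrightarrow> 0"
proof (rule tendstoI)
  fix \<delta> :: real
  assume "\<delta> > 0"
  with assms(2) obtain \<eta> where "\<eta> > 0" and G_small: "\<And>t. 0 \<le> t \<Longrightarrow> t < \<eta> \<Longrightarrow> G t < \<delta>"
    using property_G_small_near_zero by blast
  with assms(5) obtain n where close: "dist (x n) p < \<eta>"
    by (metis closure_approachable rangeE)
  have "dist (H (dist (x m) p)) 0 < \<delta>" if "n \<le> m" for m
  proof -
    obtain k where "m = n + k"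
      using \<open>n \<le> m\<close> le_Suc_ex by blast
    then have "H (dist (x m) p) \<le> G (dist (x n) p)"
      using assms(3,4) unfolding GH_fejer_monotone_def by blast
    moreover have "0 \<le> H (dist (x m) p)"
      using assms(1) unfolding nonneg_map_def by simp
    ultimately show ?thesis
      using G_small[OF zero_le_dist close] by simp
  qed
  then show "\<forall>\<^sub>F m in sequentially. dist (H (dist (x m) p)) 0 < \<delta>"
    unfolding eventually_sequentially by blast
qed

lemma GH_fejer_tendsto_adherent_point:
  assumes "nonneg_map H" "property_G G" "property_H H" "GH_fejer_monotone G H F x"
    and "p \<in> F" "p \<in> closure (range x)"
  shows "x \<longlonglongrightarrow> p"
proof -
  have "(\<lambda>m. H (dist (x m) p)) \<longlonglongrightarrow> 0"
    using GH_fejer_H_dist_tendsto_zero assms(1,2,4-6) .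
  then have "(\<lambda>m. dist (x m) p) \<longlonglongrightarrow> 0"
    using assms(3) unfolding property_H_def by simp
  then show ?thesis
    using tendsto_dist_iff by blast
qed

lemma GH_fejer_bounded:
  assumes "nonneg_map H" "bounded_preimage_prop H" "GH_fejer_monotone G H F x" "p \<in> F"
  shows "bounded (range x)"
proof -
  have "\<bar>H (dist (x m) p)\<bar> \<le> G (dist (x 0) p)" for m
    using assms(1,3,4) unfolding nonneg_map_def GH_fejer_monotone_def
    by (metis abs_of_nonneg add_0 zero_le_dist)
  then have "bounded (range (\<lambda>m. H (dist (x m) p)))"
    by (intro boundedI) auto
  then have "bounded (range (\<lambda>m. dist (x m) p))"
    using assms(2) unfolding bounded_preimage_prop_def by simp
  then obtain B where "\<And>m. dist (x m) p \<le> B"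
    unfolding bounded_iff by auto
  then show ?thesis
    unfolding bounded_def by (auto simp: dist_commute)
qed

theorem lemma4p2:
  fixes x :: "nat \<Rightarrow> 'a::metric_space"
    and F :: "'a set"
    and G H :: "real \<Rightarrow> real"
  assumes "F \<noteq> {}"
    and "nonneg_map G" and "nonneg_map H"
    and "property_G G" and "property_H H"
    and "GH_fejer_monotone G H F x"
  shows "(\<forall>xh. xh \<in> F \<and> xh \<in> closure (range x) \<longrightarrow> x \<longlonglongrightarrow> xh)
         \<and> (bounded_preimage_prop H \<longrightarrow> bounded (range x))"
proof safe
  fix xh
  assume "xh \<in> F" "xh \<in> closure (range x)"
  with assms(3-6) show "x \<longlonglongrightarrow> xh"
    by (rule GH_fejer_tendsto_adherent_point)
next
  assume "bounded_preimage_prop H"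
  moreover obtain p where "p \<in> F"
    using assms(1) by blast
  ultimately show "bounded (range x)"
    using GH_fejer_bounded assms(3,6) by blast
qed

end
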